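(* Let $N\geq 1$ be an integer. Then for all $0<t<\pi/2$, \[ L_N(t)<t\sec^2 t-\tan t-\sum_{j=1}^{N-1}\frac{2j\cdot 2^{2j+2}(2^{2j+2}-1)|B_{2j+2}|}{(2j+2)!}t^{2j+1}-\frac{N\cdot 2^{2N+4}t^{2N+1}}{\pi^{2N}(\pi^2-4t^2)}-\frac{2^{2N+6}t^{2N+3}}{\pi^{2N}(\pi^2-4t^2)^2}<M_N(t), \] where \[ L_N(t)=\frac{N\cdot 2^{2N+4}t^{2N+1}}{\pi^{2N+2}}\left\{\frac{(2^{2N+2}-1)\pi^{2N+2}|B_{2N+2}|}{2\cdot(2N+2)!}-1\right\}+\frac{2^{2N+6}t^{2N+3}}{\pi^{2N+4}}\left\{\frac{(2^{2N+4}-1)\pi^{2N+4}|B_{2N+4}|}{2\cdot(2N+4)!}-1\right\} \] and \[ M_N(t)=\frac{N\cdot 2^{2N+2}t^{2N+1}}{\pi^{2N+2}}\sum_{k=2}^{\infty}\frac{1}{(2k-1)^{2N}k(k-1)}+\frac{2^{2N+2}t^{2N+3}}{\pi^{2N+4}}\sum_{k=2}^{\infty}\frac{1}{(2k-1)^{2N}k^2(k-1)^2}. \]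
   Context: The Bernoulli numbers $B_n$ are defined by $\frac{t}{e^t-1}=\sum_{n=0}^\infty B_n\frac{t^n}{n!}$ for $|t|<2\pi$. An empty sum is understood to be zero. *)

theory Defs
  imports "HOL-Analysis.Analysis"
begin

text \<open>Bernoulli numbers B_n, defined by t/(e^t-1) = sum B_n t^n/n!
  (so B_1 = -1/2). Equivalently, via the standard recurrence
  B_0 = 1 and sum_{k=0}^{n} (n+1 choose k) B_k = 0 for n >= 1.\<close>
fun bernoulli :: "nat \<Rightarrow> real" where
  "bernoulli n = (if n = 0 then 1
     else - (\<Sum>k<n. real ((n+1) choose k) * bernoulli k) / real (n+1))"

end

theory Submission
  imports Defs
begin

(* With the poles u_k = (k + 1/2) pi of tan, the reflection formulas for Digamma and trigamma give
   tan t = sum_k (1/(u_k - t) - 1/(u_k + t)) and sec^2 t = sum_k (1/(u_k - t)^2 + 1/(u_k + t)^2).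
   Expanding each pair geometrically, the Taylor coefficients of tan are A_m = sum_k 2/u_k^(2m+2);
   comparing with the formal identity X tan X = -iX + B(2iX) - B(4iX), where B(z) = z/(e^z - 1) is the
   generating function of the Bernoulli numbers, identifies A_m = 2^(2m+2) (2^(2m+2) - 1) |B_(2m+2)| / (2m+2)!.
   Hence t sec^2 t - tan t minus its first N Taylor terms is the sum over k of
   4N t^(2N+1) / (u^(2N) (u^2 - t^2)) + 4 t^(2N+3) / (u^(2N) (u^2 - t^2)^2) at u = u_k.
   The term k = 0 is the explicit part of the middle expression; for k >= 1, replacing u^2 - t^2 by the
   larger u^2 gives L_N (summing A_N and A_(N+1) without their first terms), and by the smaller
   u^2 - pi^2/4 gives M_N. *)

section \<open>Partial fractions of tan and sec squared\<close>

lemma Gamma_reflection_real: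
  fixes x :: real
  assumes "0 < x" "x < 1"
  shows "Gamma x * Gamma (1 - x) = pi / sin (pi * x)"
proof -
  have "Gamma (complex_of_real x) * Gamma (1 - complex_of_real x) = of_real pi / sin (of_real pi * of_real x)"
    by (rule Gamma_reflection_complex)
  also have "1 - complex_of_real x = of_real (1 - x)" by simp
  finally have "of_real (Gamma x * Gamma (1 - x)) = (of_real (pi / sin (pi * x)) :: complex)"
    by (simp add: Gamma_complex_of_real sin_of_real[symmetric] del: of_real_diff)
  thus ?thesis using of_real_eq_iff by blast
qed

lemma Digamma_reflection_real:
  fixes x :: real
  assumes x: "0 < x" "x < 1"
  shows "Digamma (1 - x) - Digamma x = pi * cot (pi * x)"
proof -
  have sin_pos: "sin (pi * x) > 0" using x by (intro sin_gt_zero) auto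
  have no_poles: "x \<notin> \<int>\<^sub>\<le>\<^sub>0" "1 - x \<notin> \<int>\<^sub>\<le>\<^sub>0" using x by (auto elim!: nonpos_Ints_cases)
  have "((\<lambda>x. Gamma x * Gamma (1 - x)) has_field_derivative
      Gamma x * Gamma (1 - x) * (Digamma x - Digamma (1 - x))) (at x)"
    using no_poles by (auto intro!: derivative_eq_intros simp: algebra_simps)
  hence "((\<lambda>x. pi / sin (pi * x)) has_field_derivative
      Gamma x * Gamma (1 - x) * (Digamma x - Digamma (1 - x))) (at x)"
    by (rule has_field_derivative_transform_within_open[of _ _ _ "{0<..<1}"])
       (use x Gamma_reflection_real in auto)
  moreover have "((\<lambda>x. pi / sin (pi * x)) has_field_derivative
      - (pi * (cos (pi * x) * pi)) / (sin (pi * x))\<^sup>2) (at x)"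
    using sin_pos by (auto intro!: derivative_eq_intros simp: power2_eq_square)
  ultimately have "pi / sin (pi * x) * (Digamma x - Digamma (1 - x)) = - (pi * (cos (pi * x) * pi)) / (sin (pi * x))\<^sup>2"
    using Gamma_reflection_real[OF x] DERIV_unique by metis
  also have "\<dots> = pi / sin (pi * x) * (- pi * cot (pi * x))"
    by (simp add: cot_def power2_eq_square)
  finally have "Digamma x - Digamma (1 - x) = - pi * cot (pi * x)"
    using sin_pos by (subst (asm) mult_left_cancel) auto
  thus ?thesis by simp
qed

lemma trigamma_reflection_real:
  fixes x :: real
  assumes x: "0 < x" "x < 1"
  shows "Polygamma 1 x + Polygamma 1 (1 - x) = pi\<^sup>2 / (sin (pi * x))\<^sup>2"
proof -
  have sin_pos: "sin (pi * x) > 0" using x by (intro sin_gt_zero) auto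
  have no_poles: "x \<notin> \<int>\<^sub>\<le>\<^sub>0" "1 - x \<notin> \<int>\<^sub>\<le>\<^sub>0" using x by (auto elim!: nonpos_Ints_cases)
  have "((\<lambda>x. Digamma (1 - x) - Digamma x) has_field_derivative
      - Polygamma 1 (1 - x) - Polygamma 1 x) (at x)"
    using no_poles by (auto intro!: derivative_eq_intros)
  hence "((\<lambda>x. pi * cot (pi * x)) has_field_derivative
      - Polygamma 1 (1 - x) - Polygamma 1 x) (at x)"
    by (rule has_field_derivative_transform_within_open[of _ _ _ "{0<..<1}"])
       (use x Digamma_reflection_real in auto)
  moreover have "((\<lambda>x. pi * cot (pi * x)) has_field_derivative
      pi * (- inverse ((sin (pi * x))\<^sup>2) * pi)) (at x)"
    using sin_pos by (auto intro!: derivative_eq_intros DERIV_cot[THEN DERIV_chain2])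
  ultimately show ?thesis
    using DERIV_unique by (fastforce simp: field_simps power2_eq_square)
qed

lemma Digamma_diff_sums:
  fixes x y :: "'a :: {real_normed_field,banach}"
  assumes "x \<noteq> 0" "y \<noteq> 0"
  shows "(\<lambda>k. 1 / (x + of_nat k) - 1 / (y + of_nat k)) sums (Digamma y - Digamma x)"
proof -
  have "(\<lambda>k. inverse (of_nat (Suc k)) - inverse (z + of_nat k)) sums (Digamma z + euler_mascheroni)"
    if "z \<noteq> 0" for z :: 'a
    using summable_Digamma[OF that] by (simp add: Digamma_def summable_sums)
  from sums_diff[OF this[OF assms(2)] this[OF assms(1)]] show ?thesis
    by (simp add: divide_inverse)
qed

lemma trigamma_sums:
  fixes x :: "'a :: {real_normed_field,banach}"
  assumes "x \<noteq> 0"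
  shows "(\<lambda>k. 1 / (x + of_nat k)\<^sup>2) sums Polygamma 1 x"
  using summable_sums[OF Polygamma_converges'[OF assms, of 2]]
  by (simp add: Polygamma_def divide_inverse power2_eq_square)

definition tan_pole :: "nat \<Rightarrow> real" where
  "tan_pole k = (real k + 1 / 2) * pi"

lemma tan_pole_gt_abs:
  assumes "\<bar>t\<bar> < pi / 2"
  shows "\<bar>t\<bar> < tan_pole k"
proof -
  have "pi / 2 \<le> tan_pole k" by (simp add: tan_pole_def algebra_simps)
  with assms show ?thesis by linarith
qed

lemma tan_partial_fractions:
  assumes t: "\<bar>t\<bar> < pi / 2"
  shows "(\<lambda>k. 1 / (tan_pole k - t) - 1 / (tan_pole k + t)) sums tan t"
proof -
  define x where "x = 1 / 2 + t / pi"
  have x: "0 < x" "x < 1" using t pi_gt_zero by (auto simp: x_def field_simps abs_less_iff)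
  have "pi * cot (pi * x) = - pi * tan t"
    by (simp add: x_def cot_def tan_def algebra_simps sin_add cos_add)
  moreover have "1 / (x + real k) - 1 / (1 - x + real k)
      = - pi * (1 / (tan_pole k - t) - 1 / (tan_pole k + t))" for k
    using tan_pole_gt_abs[OF t, of k] by (simp add: x_def tan_pole_def field_simps)
  ultimately have "(\<lambda>k. - pi * (1 / (tan_pole k - t) - 1 / (tan_pole k + t))) sums (- pi * tan t)"
    using Digamma_diff_sums[of x "1 - x"] Digamma_reflection_real[OF x] x by simp
  thus ?thesis by (subst (asm) sums_mult_iff) simp_all
qed

lemma sec_squared_partial_fractions:
  assumes t: "\<bar>t\<bar> < pi / 2"
  shows "(\<lambda>k. 1 / (tan_pole k - t)\<^sup>2 + 1 / (tan_pole k + t)\<^sup>2) sums (1 / cos t)\<^sup>2"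
proof -
  define x where "x = 1 / 2 + t / pi"
  have x: "0 < x" "x < 1" using t pi_gt_zero by (auto simp: x_def field_simps abs_less_iff)
  have "sin (pi * x) = cos t"
    by (simp add: x_def algebra_simps sin_add)
  moreover have "1 / (1 - x + real k)\<^sup>2 + 1 / (x + real k)\<^sup>2
      = pi\<^sup>2 * (1 / (tan_pole k - t)\<^sup>2 + 1 / (tan_pole k + t)\<^sup>2)" for k
    using tan_pole_gt_abs[OF t, of k] by (simp add: x_def tan_pole_def field_simps)
  ultimately have "(\<lambda>k. pi\<^sup>2 * (1 / (tan_pole k - t)\<^sup>2 + 1 / (tan_pole k + t)\<^sup>2)) sums (pi\<^sup>2 * (1 / cos t)\<^sup>2)"
    using sums_add[OF trigamma_sums[of "1 - x"] trigamma_sums[of x]] trigamma_reflection_real[OF x] x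
    by (simp add: add.commute power_divide)
  thus ?thesis by (subst (asm) sums_mult_iff) simp_all
qed

section \<open>Taylor coefficients of tan as sums over the poles\<close>

lemma summable_one_div_if_square_le:
  fixes f :: "nat \<Rightarrow> real"
  assumes "\<And>k. (real k + 1)\<^sup>2 \<le> f k"
  shows "summable (\<lambda>k. 1 / f k)"
proof (rule summable_comparison_test')
  show "summable (\<lambda>k. 1 / (real k + 1)\<^sup>2)"
    using inverse_squares_sums by (simp add: sums_iff add.commute)
  show "norm (1 / f k) \<le> 1 / (real k + 1)\<^sup>2" for k
    using assms[of k] by (simp add: frac_le order.trans[OF _ assms[of k]])
qed

lemma sums_less:
  fixes f g :: "nat \<Rightarrow> real"
  assumes "f sums a" "g sums b" "\<And>n. f n < g n"
  shows "a < b"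
proof -
  have "(\<lambda>n. g n - f n) sums (b - a)" by (rule sums_diff[OF assms(2,1)])
  hence "0 < b - a"
    using suminf_pos[of "\<lambda>n. g n - f n"] assms(3) by (simp add: sums_iff)
  thus ?thesis by simp
qed

lemma tan_pole_power_ge:
  assumes "m \<ge> 2"
  shows "(real k + 1)\<^sup>2 \<le> tan_pole k ^ m"
proof -
  have "(real k + 1 / 2) * 3 \<le> (real k + 1 / 2) * pi"
    using pi_gt3 by (intro mult_left_mono) auto
  hence "real k + 1 \<le> tan_pole k" by (simp add: tan_pole_def)
  hence "(real k + 1)\<^sup>2 \<le> tan_pole k ^ 2" by (intro power_mono) auto
  also have "\<dots> \<le> tan_pole k ^ m"
    using assms \<open>real k + 1 \<le> tan_pole k\<close> by (intro power_increasing) auto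
  finally show ?thesis .
qed

definition tan_coeff :: "nat \<Rightarrow> real" where
  "tan_coeff m = (\<Sum>k. 2 / tan_pole k ^ (2 * m + 2))"

lemma tan_coeff_sums: "(\<lambda>k. 2 / tan_pole k ^ (2 * m + 2)) sums tan_coeff m"
proof -
  have "summable (\<lambda>k. 2 * (1 / tan_pole k ^ (2 * m + 2)))"
    by (intro summable_mult summable_one_div_if_square_le tan_pole_power_ge) simp
  thus ?thesis
    unfolding tan_coeff_def by (intro summable_sums) simp
qed

lemma pole_pair_eq:
  fixes t v :: real
  assumes "\<bar>t\<bar> < v"
  shows "1 / (v - t) - 1 / (v + t) = 2 * t / (v\<^sup>2 - t\<^sup>2)"
  using assms by (simp add: field_simps power2_eq_square abs_less_iff)

lemma pole_pair_geometric_remainder: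
  fixes t v :: real
  assumes "\<bar>t\<bar> < v"
  shows "1 / (v - t) - 1 / (v + t) - (\<Sum>m<M. 2 * t ^ (2 * m + 1) / v ^ (2 * m + 2))
           = (t / v) ^ (2 * M) * (1 / (v - t) - 1 / (v + t))"
proof (induction M)
  case (Suc M)
  define P where "P = 1 / (v - t) - 1 / (v + t)"
  have "\<bar>t\<bar>\<^sup>2 < v\<^sup>2" using assms by (intro power_strict_mono) auto
  hence "v\<^sup>2 - t\<^sup>2 \<noteq> 0" "v \<noteq> 0" by auto
  hence step: "P - 2 * t / v\<^sup>2 = (t / v)\<^sup>2 * P"
    unfolding P_def pole_pair_eq[OF assms] by (simp add: field_simps power2_eq_square)
  have "P - (\<Sum>m<Suc M. 2 * t ^ (2 * m + 1) / v ^ (2 * m + 2))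
      = (t / v) ^ (2 * M) * P - 2 * t ^ (2 * M + 1) / v ^ (2 * M + 2)"
    using Suc by (simp add: P_def)
  also have "2 * t ^ (2 * M + 1) / v ^ (2 * M + 2) = (t / v) ^ (2 * M) * (2 * t / v\<^sup>2)"
    by (simp add: power_add power_divide power2_eq_square mult_ac)
  also have "(t / v) ^ (2 * M) * P - \<dots> = (t / v) ^ (2 * M) * (P - 2 * t / v\<^sup>2)"
    by (simp only: right_diff_distrib)
  also have "\<dots> = (t / v) ^ (2 * Suc M) * P"
    unfolding step by (simp add: power_add power2_eq_square mult_ac)
  finally show ?case by (simp add: P_def)
qed simp

lemma tan_taylor_remainder_sums:
  assumes t: "\<bar>t\<bar> < pi / 2"
  shows "(\<lambda>k. (t / tan_pole k) ^ (2 * M) * (1 / (tan_pole k - t) - 1 / (tan_pole k + t)))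
           sums (tan t - (\<Sum>m<M. tan_coeff m * t ^ (2 * m + 1)))"
proof -
  have "(\<lambda>k. \<Sum>m<M. t ^ (2 * m + 1) * (2 / tan_pole k ^ (2 * m + 2)))
          sums (\<Sum>m<M. t ^ (2 * m + 1) * tan_coeff m)"
    by (intro sums_sum sums_mult tan_coeff_sums)
  from sums_diff[OF tan_partial_fractions[OF t] this] show ?thesis
    using pole_pair_geometric_remainder[OF tan_pole_gt_abs[OF t]]
    by (simp add: mult.commute)
qed

lemma tan_taylor_remainder_bound:
  assumes t: "\<bar>t\<bar> < pi / 2"
  shows "\<bar>tan t - (\<Sum>m<M. tan_coeff m * t ^ (2 * m + 1))\<bar> \<le> (2 * \<bar>t\<bar> / pi) ^ (2 * M) * tan \<bar>t\<bar>"
proof -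
  define p where "p x v = 1 / (v - x) - 1 / (v + x)" for x v :: real
  have "\<bar>(t / v) ^ (2 * M) * p t v\<bar> \<le> (2 * \<bar>t\<bar> / pi) ^ (2 * M) * p \<bar>t\<bar> v"
    if v: "\<bar>t\<bar> < v" "pi / 2 \<le> v" for v
  proof -
    have "\<bar>t\<bar>\<^sup>2 < v\<^sup>2" using v by (intro power_strict_mono) auto
    hence "\<bar>p t v\<bar> = p \<bar>t\<bar> v" "0 \<le> p \<bar>t\<bar> v"
      using v by (simp_all add: p_def pole_pair_eq abs_divide abs_mult)
    moreover have "pi * \<bar>t\<bar> \<le> (2 * v) * \<bar>t\<bar>" using v by (intro mult_right_mono) auto
    hence "\<bar>t / v\<bar> \<le> 2 * \<bar>t\<bar> / pi" using v by (simp add: abs_divide field_simps)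
    hence "\<bar>t / v\<bar> ^ (2 * M) \<le> (2 * \<bar>t\<bar> / pi) ^ (2 * M)" by (intro power_mono) auto
    ultimately show ?thesis by (simp add: abs_mult power_abs mult_right_mono)
  qed
  moreover have "pi / 2 \<le> tan_pole k" for k by (simp add: tan_pole_def algebra_simps)
  moreover have "(\<lambda>k. (2 * \<bar>t\<bar> / pi) ^ (2 * M) * p \<bar>t\<bar> (tan_pole k))
          sums ((2 * \<bar>t\<bar> / pi) ^ (2 * M) * tan \<bar>t\<bar>)"
    unfolding p_def using t by (intro sums_mult tan_partial_fractions) simp
  ultimately show ?thesis
    using norm_sums_le[OF tan_taylor_remainder_sums[OF t]] tan_pole_gt_abs[OF t]
    unfolding p_def by simp
qed

lemma tan_coeff_taylor_sums:
  assumes t: "\<bar>t\<bar> < pi / 2"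
  shows "(\<lambda>m. tan_coeff m * t ^ (2 * m + 1)) sums tan t"
proof -
  have "\<bar>2 * \<bar>t\<bar> / pi\<bar> < 1" using t by (simp add: field_simps)
  hence "\<bar>(2 * \<bar>t\<bar> / pi)\<^sup>2\<bar> < 1" by (simp add: abs_square_less_1)
  hence "(\<lambda>M. ((2 * \<bar>t\<bar> / pi)\<^sup>2) ^ M * tan \<bar>t\<bar>) \<longlonglongrightarrow> 0"
    by (intro tendsto_mult_left_zero LIMSEQ_power_zero) simp
  hence "(\<lambda>M. (2 * \<bar>t\<bar> / pi) ^ (2 * M) * tan \<bar>t\<bar>) \<longlonglongrightarrow> 0"
    by (simp add: power_mult)
  hence "(\<lambda>M. tan t - (\<Sum>m<M. tan_coeff m * t ^ (2 * m + 1))) \<longlonglongrightarrow> 0"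
    by (rule Lim_null_comparison[rotated]) (use tan_taylor_remainder_bound[OF t] in simp)
  hence "(\<lambda>M. tan t - (tan t - (\<Sum>m<M. tan_coeff m * t ^ (2 * m + 1)))) \<longlonglongrightarrow> tan t - 0"
    by (intro tendsto_diff tendsto_const)
  thus ?thesis by (simp add: sums_def)
qed

section \<open>Taylor coefficients of tan and Bernoulli numbers\<close>

lemma zero_has_fps_expansion_imp_eq_0:
  fixes H :: "'a :: {real_normed_field,banach} fps"
  assumes "(\<lambda>_. 0) has_fps_expansion H"
  shows "H = 0"
proof (rule ccontr)
  assume "H \<noteq> 0"
  define n where "n = subdegree H"
  define S where "S = fps_shift n H"
  have r: "fps_conv_radius H > 0" and zero: "eventually (\<lambda>z. eval_fps H z = 0) (nhds 0)"
    using assms by (auto simp: has_fps_expansion_def)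
  have "eventually (\<lambda>z. z \<in> eball 0 (fps_conv_radius H)) (nhds (0 :: 'a))"
    using r by (intro eventually_nhds_in_open) (auto simp: zero_ereal_def)
  with zero have "eventually (\<lambda>z. eval_fps S z = 0) (at 0)"
    unfolding eventually_at_filter
    by eventually_elim (auto simp: S_def n_def eval_fps_shift dist_norm)
  hence "(eval_fps S \<longlongrightarrow> 0) (at 0)" by (rule tendsto_eventually)
  moreover have "continuous (at 0) (eval_fps S)"
    using r by (intro continuous_eval_fps) (simp add: S_def zero_ereal_def)
  hence "(eval_fps S \<longlongrightarrow> eval_fps S 0) (at 0)" by (simp add: continuous_at)
  ultimately have "eval_fps S 0 = 0" using tendsto_unique by (metis at_neq_bot)
  hence "fps_nth H n = 0" by (simp add: S_def eval_fps_at_0)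
  with \<open>H \<noteq> 0\<close> show False by (simp add: n_def)
qed

lemma fps_expansion_unique:
  fixes F G :: "'a :: {real_normed_field,banach} fps"
  assumes "f has_fps_expansion F" "f has_fps_expansion G"
  shows "F = G"
proof -
  have "(\<lambda>x. f x - f x) has_fps_expansion F - G" by (intro has_fps_expansion_diff assms)
  hence "F - G = 0" by (intro zero_has_fps_expansion_imp_eq_0) simp
  thus ?thesis by simp
qed

lemma tan_coeff_fps_tan: "fps_nth (fps_tan (1 :: real)) (2 * m + 1) = tan_coeff m"
proof -
  define T where "T = Abs_fps (\<lambda>n. if odd n then tan_coeff (n div 2) else 0)"
  have "(\<lambda>n. fps_nth T n * t ^ n) sums tan t" if "\<bar>t\<bar> < pi / 2" for t
  proof (subst sums_mono_reindex[of "\<lambda>m. 2 * m + 1", symmetric])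
    show "strict_mono (\<lambda>m :: nat. 2 * m + 1)" by (rule strict_monoI) simp
    show "fps_nth T n * t ^ n = 0" if "n \<notin> range (\<lambda>m. 2 * m + 1)" for n
      using that by (auto simp: T_def elim!: oddE)
    show "(\<lambda>m. fps_nth T (2 * m + 1) * t ^ (2 * m + 1)) sums tan t"
      using tan_coeff_taylor_sums[OF \<open>\<bar>t\<bar> < pi / 2\<close>] by (simp add: T_def)
  qed
  moreover have "eventually (\<lambda>t :: real. t \<in> ball 0 (pi / 2)) (nhds 0)"
    by (intro eventually_nhds_in_open) auto
  ultimately have "tan has_fps_expansion T"
    by (intro has_fps_expansionI) (auto elim!: eventually_mono)
  hence "T = fps_tan 1" by (rule fps_expansion_unique[OF _ has_fps_expansion_tan'])
  hence "fps_nth (fps_tan 1) (2 * m + 1) = fps_nth T (2 * m + 1)" by simp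
  also have "\<dots> = tan_coeff m" by (simp add: T_def)
  finally show ?thesis .
qed

declare bernoulli.simps [simp del]

lemma sum_binomial_bernoulli:
  assumes "n \<ge> 1"
  shows "(\<Sum>k<n. real (n choose k) * bernoulli k) = of_bool (n = 1)"
proof (cases "n = 1")
  case False
  then obtain m where m: "n = Suc m" "m \<ge> 1" using assms by (cases n) auto
  have "bernoulli m * real (m + 1) = - (\<Sum>k<m. real ((m + 1) choose k) * bernoulli k)"
    using m(2) by (subst bernoulli.simps) (simp add: field_simps)
  thus ?thesis using m by (simp add: algebra_simps)
qed (simp add: bernoulli.simps)

definition bernoulli_fps :: "'a :: real_field \<Rightarrow> 'a fps" where
  "bernoulli_fps c = Abs_fps (\<lambda>n. of_real (bernoulli n) * c ^ n / fact n)"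

lemma bernoulli_fps_mult_exp: "bernoulli_fps c * (fps_exp c - 1) = fps_const c * fps_X"
proof (rule fps_ext)
  fix n
  show "fps_nth (bernoulli_fps c * (fps_exp c - 1)) n = fps_nth (fps_const c * fps_X) n"
  proof (cases "n = 0")
    case False
    have "fps_nth (bernoulli_fps c * (fps_exp c - 1)) n
        = (\<Sum>k<n. of_real (bernoulli k) * c ^ k / fact k * (c ^ (n - k) / fact (n - k)))"
      unfolding fps_mult_nth atLeast0AtMost lessThan_Suc_atMost[symmetric]
      by (simp add: bernoulli_fps_def mult_ac)
    also have "\<dots> = c ^ n / fact n * of_real (\<Sum>k<n. real (n choose k) * bernoulli k)"
      unfolding sum_distrib_left of_real_sum
      by (intro sum.cong refl)
         (simp add: binomial_fact field_simps power_add[symmetric] of_nat_diff)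
    also have "\<dots> = fps_nth (fps_const c * fps_X) n"
      using False by (simp add: sum_binomial_bernoulli fps_X_def)
    finally show ?thesis .
  qed (simp add: fps_mult_nth)
qed

lemma unit_circle_square_identities:
  fixes C S I :: "'a :: idom"
  assumes "I * I = -1" "C\<^sup>2 + S\<^sup>2 = 1"
  shows "(C + I * S)\<^sup>2 - 1 = 2 * I * S * (C + I * S)"
    and "(C + I * S)\<^sup>2 + 1 = 2 * C * (C + I * S)"
  using assms by algebra+

lemma fps_cos_nonzero: "fps_cos (c :: 'a :: field_char_0) \<noteq> 0"
proof
  assume "fps_cos c = 0"
  hence "fps_nth (fps_cos c) 0 = 0" by simp
  thus False by simp
qed

lemma fps_tan_mult_fps_cos: "fps_tan c * fps_cos c = fps_sin (c :: 'a :: field_char_0)"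
proof -
  have "fps_nth (fps_cos c) 0 \<noteq> 0" by simp
  hence "inverse (fps_cos c) * fps_cos c = 1" by (rule inverse_mult_eq_1)
  thus ?thesis by (simp add: fps_tan_def fps_divide_unit mult.assoc)
qed

(* The formal version of x tan x = x cot x - 2x cot 2x, as x cot x = ix + B(2ix). *)
lemma fps_X_mult_fps_tan_eq_bernoulli_fps:
  "fps_X * fps_tan 1 = - (fps_const \<i> * fps_X) + bernoulli_fps (2 * \<i>) - bernoulli_fps (4 * \<i>)"
proof -
  define I where "I = fps_const (\<i> :: complex)"
  define C where "C = fps_cos (1 :: complex)"
  define S where "S = fps_sin (1 :: complex)"
  define u where "u = fps_exp (\<i> :: complex)"
  define X where "X = (fps_X :: complex fps)"
  define B where "B = - (I * X) + bernoulli_fps (2 * \<i>) - bernoulli_fps (4 * \<i>)"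
  have II: "I * I = -1" by (simp add: I_def)
  have u: "u = C + I * S" using fps_exp_ii_sin_cos[of 1] by (simp add: u_def C_def I_def S_def)
  have "C\<^sup>2 + S\<^sup>2 = 1" unfolding C_def S_def by (rule fps_sin_cos_sum_of_squares)
  note unit_circle = unit_circle_square_identities[OF II this, folded u]
  have u2: "u\<^sup>2 = fps_exp (2 * \<i>)" and u4: "u ^ 4 = fps_exp (4 * \<i>)"
    by (simp_all add: u_def fps_exp_power_mult)
  have factor: "u ^ 4 - 1 = (u\<^sup>2 - 1) * (u\<^sup>2 + 1)"
    by (simp add: algebra_simps power2_eq_square power4_eq_xxxx)
  have B2: "bernoulli_fps (2 * \<i>) * (u\<^sup>2 - 1) = 2 * I * X"
    using bernoulli_fps_mult_exp[of "2 * \<i>"] by (simp add: u2 I_def X_def numeral_fps_const)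
  have B4: "bernoulli_fps (4 * \<i>) * (u ^ 4 - 1) = 4 * I * X"
    using bernoulli_fps_mult_exp[of "4 * \<i>"] by (simp add: u4 I_def X_def numeral_fps_const)
  have "B * (u ^ 4 - 1) = - (I * X) * (u\<^sup>2 - 1)\<^sup>2"
    unfolding B_def using B2 B4 by (simp add: factor algebra_simps power2_eq_square)
  also have "\<dots> = 4 * X * S\<^sup>2 * u\<^sup>2 * (- (I * I)) * I"
    unfolding unit_circle by (simp add: power2_eq_square algebra_simps)
  finally have lhs: "B * (u ^ 4 - 1) = 4 * X * S\<^sup>2 * u\<^sup>2 * I"
    by (simp add: II)
  have rhs: "X * S * (u ^ 4 - 1) = 4 * X * S\<^sup>2 * u\<^sup>2 * I * C"
    unfolding factor unit_circle by (simp add: power2_eq_square algebra_simps)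
  have "(B * C) * (u ^ 4 - 1) = (X * fps_tan 1 * C) * (u ^ 4 - 1)"
    using fps_tan_mult_fps_cos[of "1 :: complex"] lhs rhs
    by (simp add: C_def S_def X_def mult_ac)
  moreover have "u ^ 4 - 1 \<noteq> 0"
  proof
    assume "u ^ 4 - 1 = 0"
    hence "fps_nth (u ^ 4 - 1) 1 = 0" by simp
    thus False unfolding u4 by simp
  qed
  ultimately have "X * fps_tan 1 = B" using fps_cos_nonzero[of "1 :: complex"] by (simp add: C_def)
  thus ?thesis by (simp add: B_def X_def I_def)
qed

lemma fps_nth_fps_tan_complex:
  "fps_nth (fps_tan (1 :: complex)) n = of_real (fps_nth (fps_tan (1 :: real)) n)"
proof -
  define T where "T = Abs_fps (\<lambda>n. complex_of_real (fps_nth (fps_tan 1) n))"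
  have "fps_nth (fps_cos (1 :: complex)) n = of_real (fps_nth (fps_cos 1) n)" for n
    by (simp add: fps_cos_def)
  hence "fps_nth (T * fps_cos 1) n = of_real (fps_nth (fps_tan 1 * fps_cos 1) n)" for n
    unfolding fps_mult_nth by (simp add: T_def)
  hence "T * fps_cos 1 = fps_tan 1 * fps_cos 1"
    unfolding fps_tan_mult_fps_cos by (intro fps_ext) (simp add: fps_sin_def)
  hence "fps_tan 1 = T" using fps_cos_nonzero[of "1 :: complex"] by simp
  thus ?thesis by (simp add: T_def)
qed

lemma tan_coeff_signed_bernoulli:
  "tan_coeff m = (-1) ^ m * 2 ^ (2 * m + 2) * (2 ^ (2 * m + 2) - 1) * bernoulli (2 * m + 2) / fact (2 * m + 2)"
proof -
  have ii_power: "(c * \<i>) ^ (2 * m + 2) = (- (c\<^sup>2)) ^ (m + 1)" for c :: complex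
  proof -
    have "2 * m + 2 = 2 * (m + 1)" by simp
    hence "(c * \<i>) ^ (2 * m + 2) = ((c * \<i>)\<^sup>2) ^ (m + 1)" by (simp only: power_mult)
    thus ?thesis by (simp add: power_mult_distrib)
  qed
  have "(2 :: real) ^ (2 * m + 2) = (2\<^sup>2) ^ (m + 1)"
    unfolding power_mult[symmetric] by simp
  moreover have "(-16 :: real) ^ (m + 1) = (-4) ^ (m + 1) * 4 ^ (m + 1)"
    by (simp flip: power_mult_distrib)
  moreover have "(-4 :: real) ^ (m + 1) = - ((-1) ^ m * 4 ^ (m + 1))"
    by (simp flip: power_mult_distrib)
  ultimately have signs:
    "(-4) ^ (m + 1) - (-16) ^ (m + 1) = (-1) ^ m * 2 ^ (2 * m + 2) * (2 ^ (2 * m + 2) - 1 :: real)"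
    by (simp add: algebra_simps)
  have "complex_of_real (tan_coeff m) = fps_nth (fps_X * fps_tan 1) (2 * m + 2)"
    using tan_coeff_fps_tan[of m] by (simp add: fps_nth_fps_tan_complex)
  also have "\<dots> = of_real (bernoulli (2 * m + 2)) * (2 * \<i>) ^ (2 * m + 2) / fact (2 * m + 2)
                   - of_real (bernoulli (2 * m + 2)) * (4 * \<i>) ^ (2 * m + 2) / fact (2 * m + 2)"
    unfolding fps_X_mult_fps_tan_eq_bernoulli_fps fps_sub_nth fps_add_nth fps_neg_nth
    by (simp only: bernoulli_fps_def fps_nth_Abs_fps) simp
  also have "\<dots> = of_real (bernoulli (2 * m + 2) * ((-4) ^ (m + 1) - (-16) ^ (m + 1)) / fact (2 * m + 2))"
    unfolding ii_power by (simp add: diff_divide_distrib right_diff_distrib)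
  finally have "tan_coeff m = bernoulli (2 * m + 2) * ((-4) ^ (m + 1) - (-16) ^ (m + 1)) / fact (2 * m + 2)"
    using of_real_eq_iff by blast
  thus ?thesis unfolding signs by (simp add: mult_ac)
qed

lemma tan_coeff_pos: "tan_coeff m > 0"
  unfolding tan_coeff_def
  by (rule suminf_pos) (use tan_coeff_sums[of m] in \<open>auto simp: sums_iff tan_pole_def\<close>)

lemma tan_coeff_bernoulli:
  "tan_coeff m = 2 ^ (2 * m + 2) * (2 ^ (2 * m + 2) - 1) * \<bar>bernoulli (2 * m + 2)\<bar> / fact (2 * m + 2)"
proof -
  have "(1 :: real) < 2 ^ (2 * m + 2)" by (rule one_less_power) auto
  have "tan_coeff m = \<bar>tan_coeff m\<bar>" using tan_coeff_pos[of m] by simp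
  also have "\<dots> = \<bar>(-1) ^ m * 2 ^ (2 * m + 2) * (2 ^ (2 * m + 2) - 1) * bernoulli (2 * m + 2) / fact (2 * m + 2)\<bar>"
    by (simp only: tan_coeff_signed_bernoulli)
  also have "\<dots> = 2 ^ (2 * m + 2) * (2 ^ (2 * m + 2) - 1) * \<bar>bernoulli (2 * m + 2)\<bar> / fact (2 * m + 2)"
    using \<open>1 < 2 ^ (2 * m + 2)\<close> by (simp add: abs_mult abs_divide power_abs)
  finally show ?thesis .
qed

section \<open>The remainder after N Taylor terms, pole by pole\<close>

(* The contribution of the poles +-v to t sec^2 t - tan t minus its first N Taylor terms
   (pole_remainder_eq). *)
definition pole_remainder :: "nat \<Rightarrow> real \<Rightarrow> real \<Rightarrow> real" where
  "pole_remainder N t v = 4 * real N * t ^ (2 * N + 1) / (v ^ (2 * N) * (v\<^sup>2 - t\<^sup>2))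
                          + 4 * t ^ (2 * N + 3) / (v ^ (2 * N) * (v\<^sup>2 - t\<^sup>2)\<^sup>2)"

lemma pole_remainder_Suc:
  assumes "v \<noteq> 0" "v\<^sup>2 \<noteq> t\<^sup>2"
  shows "pole_remainder (Suc N) t v = pole_remainder N t v - 4 * real N * t ^ (2 * N + 1) / v ^ (2 * N + 2)"
proof -
  define A where "A = t ^ (2 * N + 1)"
  define Q where "Q = v ^ (2 * N)"
  define W where "W = v\<^sup>2"
  define D where "D = v\<^sup>2 - t\<^sup>2"
  have nonzero: "Q \<noteq> 0" "D \<noteq> 0" "W \<noteq> 0" and W: "W = D + t\<^sup>2"
    using assms by (simp_all add: Q_def D_def W_def)
  have identity: "4 * real (Suc N) * (A * t\<^sup>2) / (Q * W * D) + 4 * (A * t\<^sup>2 * t\<^sup>2) / (Q * W * D\<^sup>2)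
      = 4 * real N * A / (Q * D) + 4 * (A * t\<^sup>2) / (Q * D\<^sup>2) - 4 * real N * A / (Q * W)"
    using nonzero by (simp add: field_simps) (simp add: W algebra_simps power2_eq_square power4_eq_xxxx)
  have powers: "t ^ (2 * Suc N + 1) = A * t\<^sup>2" "t ^ (2 * Suc N + 3) = A * t\<^sup>2 * t\<^sup>2"
    "t ^ (2 * N + 3) = A * t\<^sup>2" "v ^ (2 * Suc N) = Q * W" "v ^ (2 * N + 2) = Q * W"
    unfolding A_def Q_def W_def
    by (simp_all only: mult.assoc power_add[symmetric]; rule arg_cong[where f = "power _"]; simp)+
  show ?thesis
    unfolding pole_remainder_def powers D_def[symmetric] A_def[symmetric] Q_def[symmetric]
    by (rule identity)
qed

lemma pole_remainder_eq:
  fixes t v :: real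
  assumes "\<bar>t\<bar> < v"
  shows "t * (1 / (v - t)\<^sup>2 + 1 / (v + t)\<^sup>2) - (1 / (v - t) - 1 / (v + t))
           - (\<Sum>j<N. 4 * real j * t ^ (2 * j + 1) / v ^ (2 * j + 2)) = pole_remainder N t v"
proof (induction N)
  case 0
  define D where "D = v\<^sup>2 - t\<^sup>2"
  have "v - t \<noteq> 0" "v + t \<noteq> 0" using assms by auto
  hence "1 / (v - t)\<^sup>2 + 1 / (v + t)\<^sup>2 = 2 * (v\<^sup>2 + t\<^sup>2) / ((v - t) * (v + t))\<^sup>2"
    by (simp add: divide_simps) (simp add: algebra_simps power2_eq_square)
  also have "\<dots> = 2 * (D + 2 * t\<^sup>2) / D\<^sup>2"
    by (simp add: D_def power2_eq_square algebra_simps)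
  finally have "t * (1 / (v - t)\<^sup>2 + 1 / (v + t)\<^sup>2) - (1 / (v - t) - 1 / (v + t))
      = t * (2 * (D + 2 * t\<^sup>2) / D\<^sup>2) - 2 * t / D"
    by (simp add: pole_pair_eq[OF assms] D_def)
  also have "D \<noteq> 0"
    using \<open>v - t \<noteq> 0\<close> \<open>v + t \<noteq> 0\<close> by (simp add: D_def power2_eq_square square_diff_square_factored)
  hence "t * (2 * (D + 2 * t\<^sup>2) / D\<^sup>2) - 2 * t / D = 4 * t ^ 3 / D\<^sup>2"
    by (simp add: field_simps) (simp add: algebra_simps power2_eq_square power3_eq_cube power4_eq_xxxx)
  finally show ?case by (simp add: pole_remainder_def D_def)
next
  case (Suc N)
  have "\<bar>t\<bar>\<^sup>2 < v\<^sup>2" using assms by (intro power_strict_mono) auto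
  hence "v \<noteq> 0" "v\<^sup>2 \<noteq> t\<^sup>2" by auto
  with Suc show ?case by (simp add: pole_remainder_Suc)
qed

lemma pole_remainder_sums:
  assumes t: "\<bar>t\<bar> < pi / 2"
  shows "(\<lambda>k. pole_remainder N t (tan_pole k))
           sums (t * (1 / cos t)\<^sup>2 - tan t - (\<Sum>j<N. 2 * real j * tan_coeff j * t ^ (2 * j + 1)))"
proof -
  have "(\<lambda>k. t * (1 / (tan_pole k - t)\<^sup>2 + 1 / (tan_pole k + t)\<^sup>2) - (1 / (tan_pole k - t) - 1 / (tan_pole k + t)))
          sums (t * (1 / cos t)\<^sup>2 - tan t)"
    by (intro sums_diff sums_mult sec_squared_partial_fractions tan_partial_fractions t)
  moreover have "(\<lambda>k. 4 * real j * t ^ (2 * j + 1) / tan_pole k ^ (2 * j + 2))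
          sums (2 * real j * tan_coeff j * t ^ (2 * j + 1))" for j
    using sums_mult[OF tan_coeff_sums[of j], of "2 * real j * t ^ (2 * j + 1)"] by (simp add: mult_ac)
  hence "(\<lambda>k. \<Sum>j<N. 4 * real j * t ^ (2 * j + 1) / tan_pole k ^ (2 * j + 2))
          sums (\<Sum>j<N. 2 * real j * tan_coeff j * t ^ (2 * j + 1))"
    by (rule sums_sum)
  ultimately show ?thesis
    unfolding pole_remainder_eq[OF tan_pole_gt_abs[OF t], symmetric] by (rule sums_diff)
qed

lemma pole_remainder_half_pi_multiple:
  assumes "0 < c" "\<bar>t\<bar> < c * pi / 2"
  shows "pole_remainder N t (c * pi / 2)
           = real N * 2 ^ (2 * N + 4) * t ^ (2 * N + 1) / (pi ^ (2 * N) * c ^ (2 * N) * (c\<^sup>2 * pi\<^sup>2 - 4 * t\<^sup>2))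
             + 2 ^ (2 * N + 6) * t ^ (2 * N + 3) / (pi ^ (2 * N) * c ^ (2 * N) * (c\<^sup>2 * pi\<^sup>2 - 4 * t\<^sup>2)\<^sup>2)"
proof -
  have "\<bar>t\<bar>\<^sup>2 < (c * pi / 2)\<^sup>2" using assms by (intro power_strict_mono) auto
  hence "c\<^sup>2 * pi\<^sup>2 - 4 * t\<^sup>2 \<noteq> 0" by (simp add: power_divide power_mult_distrib)
  moreover have "(c * pi / 2) ^ (2 * N) = pi ^ (2 * N) * c ^ (2 * N) / 4 ^ N"
    "(c * pi / 2)\<^sup>2 - t\<^sup>2 = (c\<^sup>2 * pi\<^sup>2 - 4 * t\<^sup>2) / 4"
    "(2 :: real) ^ (2 * N + 4) = 16 * 4 ^ N" "(2 :: real) ^ (2 * N + 6) = 64 * 4 ^ N"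
    by (simp_all add: power_mult_distrib power_divide power_mult power_add)
  ultimately show ?thesis
    using assms(1) by (simp add: pole_remainder_def field_simps)
qed

lemma pole_remainder_gt:
  assumes "0 < t" "t < v"
  shows "4 * real N * t ^ (2 * N + 1) / v ^ (2 * N + 2) + 4 * t ^ (2 * N + 3) / v ^ (2 * N + 4)
           < pole_remainder N t v"
proof -
  have "t\<^sup>2 < v\<^sup>2" using assms by (intro power_strict_mono) auto
  hence D: "0 < v\<^sup>2 - t\<^sup>2" "v\<^sup>2 - t\<^sup>2 < v\<^sup>2" using assms by auto
  have "v ^ (2 * N) * (v\<^sup>2 - t\<^sup>2) < v ^ (2 * N + 2)"
    using D assms by (simp add: power_add power2_eq_square)
  moreover have "v ^ (2 * N) * (v\<^sup>2 - t\<^sup>2)\<^sup>2 < v ^ (2 * N + 4)"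
  proof -
    have "(v\<^sup>2 - t\<^sup>2)\<^sup>2 < (v\<^sup>2)\<^sup>2" using D by (intro power_strict_mono) auto
    thus ?thesis using assms by (simp add: power_add flip: power_mult)
  qed
  ultimately show ?thesis
    unfolding pole_remainder_def using assms D
    by (intro add_le_less_mono divide_left_mono divide_strict_left_mono) auto
qed

lemma pole_remainder_less:
  assumes "1 < c" "0 < t" "t < pi / 2"
  shows "pole_remainder N t (c * pi / 2)
           < real N * 2 ^ (2 * N + 4) * t ^ (2 * N + 1) / (pi ^ (2 * N + 2) * c ^ (2 * N) * (c\<^sup>2 - 1))
             + 2 ^ (2 * N + 6) * t ^ (2 * N + 3) / (pi ^ (2 * N + 4) * c ^ (2 * N) * (c\<^sup>2 - 1)\<^sup>2)"
proof -
  have "0 < c" "pi < c * pi" using assms by simp_all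
  hence "\<bar>t\<bar> < c * pi / 2" using assms by (simp only: abs_of_pos)
  note remainder = pole_remainder_half_pi_multiple[OF \<open>0 < c\<close> this]
  have "(2 * t)\<^sup>2 < pi\<^sup>2" using assms by (intro power_strict_mono) auto
  hence gap: "(c\<^sup>2 - 1) * pi\<^sup>2 < c\<^sup>2 * pi\<^sup>2 - 4 * t\<^sup>2" by (simp add: algebra_simps)
  have "1 < c\<^sup>2" using assms(1) by (intro one_less_power) auto
  hence pos: "0 < c\<^sup>2 - 1" "0 < (c\<^sup>2 - 1) * pi\<^sup>2" "c\<^sup>2 \<noteq> 1" by simp_all
  with gap have pos': "0 < c\<^sup>2 * pi\<^sup>2 - 4 * t\<^sup>2" by linarith
  have den1: "pi ^ (2 * N + 2) * c ^ (2 * N) * (c\<^sup>2 - 1) < pi ^ (2 * N) * c ^ (2 * N) * (c\<^sup>2 * pi\<^sup>2 - 4 * t\<^sup>2)"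
    using gap assms by (simp add: power_add power2_eq_square mult_ac)
  have den2: "pi ^ (2 * N + 4) * c ^ (2 * N) * (c\<^sup>2 - 1)\<^sup>2 < pi ^ (2 * N) * c ^ (2 * N) * (c\<^sup>2 * pi\<^sup>2 - 4 * t\<^sup>2)\<^sup>2"
  proof -
    have "((c\<^sup>2 - 1) * pi\<^sup>2)\<^sup>2 < (c\<^sup>2 * pi\<^sup>2 - 4 * t\<^sup>2)\<^sup>2" using gap pos by (intro power_strict_mono) auto
    thus ?thesis using assms by (simp add: power_add power_mult_distrib mult_ac flip: power_mult)
  qed
  have "0 < pi ^ k * c ^ (2 * N) * (c\<^sup>2 - 1) ^ m" "0 < pi ^ k * c ^ (2 * N) * (c\<^sup>2 * pi\<^sup>2 - 4 * t\<^sup>2) ^ m"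
    for k m using pos pos' \<open>0 < c\<close> by (intro mult_pos_pos zero_less_power; simp)+
  note positive = this[where m = 1, simplified] this[where m = 2]
  show ?thesis
    unfolding remainder
  proof (rule add_le_less_mono)
    show "real N * 2 ^ (2 * N + 4) * t ^ (2 * N + 1) / (pi ^ (2 * N) * c ^ (2 * N) * (c\<^sup>2 * pi\<^sup>2 - 4 * t\<^sup>2))
        \<le> real N * 2 ^ (2 * N + 4) * t ^ (2 * N + 1) / (pi ^ (2 * N + 2) * c ^ (2 * N) * (c\<^sup>2 - 1))"
      using den1 assms positive pos pos' by (intro divide_left_mono mult_pos_pos) auto
    show "2 ^ (2 * N + 6) * t ^ (2 * N + 3) / (pi ^ (2 * N) * c ^ (2 * N) * (c\<^sup>2 * pi\<^sup>2 - 4 * t\<^sup>2)\<^sup>2)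
        < 2 ^ (2 * N + 6) * t ^ (2 * N + 3) / (pi ^ (2 * N + 4) * c ^ (2 * N) * (c\<^sup>2 - 1)\<^sup>2)"
      using den2 assms positive pos pos' by (intro divide_strict_left_mono mult_pos_pos) auto
  qed
qed

lemma tan_coeff_tail_sums:
  "(\<lambda>k. 2 / tan_pole (Suc k) ^ (2 * m + 2)) sums (tan_coeff m - 2 / (pi / 2) ^ (2 * m + 2))"
  using tan_coeff_sums[of m] by (subst sums_Suc_iff) (simp add: tan_pole_def)

lemma tan_coeff_tail_eq:
  "2 * (tan_coeff m - 2 / (pi / 2) ^ (2 * m + 2))
     = 2 ^ (2 * m + 4) / pi ^ (2 * m + 2)
       * ((2 ^ (2 * m + 2) - 1) * pi ^ (2 * m + 2) * \<bar>bernoulli (2 * m + 2)\<bar> / (2 * fact (2 * m + 2)) - 1)"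
proof -
  define T P F where "T = (2 :: real) ^ (2 * m + 2)" and "P = pi ^ (2 * m + 2)" and "F = (fact (2 * m + 2) :: real)"
  have "P > 0" "F > 0" "T > 0" by (simp_all add: P_def F_def T_def)
  moreover have "(2 :: real) ^ (2 * m + 4) = 4 * T" by (simp add: T_def power_add)
  moreover have "(pi / 2) ^ (2 * m + 2) = P / T" by (simp add: P_def T_def power_divide)
  ultimately show ?thesis
    unfolding tan_coeff_bernoulli T_def[symmetric] P_def[symmetric] F_def[symmetric]
    by (simp add: field_simps)
qed

lemma L_series_sums:
  "(\<lambda>k. 4 * real N * t ^ (2 * N + 1) / tan_pole (Suc k) ^ (2 * N + 2) + 4 * t ^ (2 * N + 3) / tan_pole (Suc k) ^ (2 * N + 4))
     sums (real N * 2 ^ (2 * N + 4) * t ^ (2 * N + 1) / pi ^ (2 * N + 2) *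
            ((2 ^ (2 * N + 2) - 1) * pi ^ (2 * N + 2) * \<bar>bernoulli (2 * N + 2)\<bar> / (2 * fact (2 * N + 2)) - 1)
          + 2 ^ (2 * N + 6) * t ^ (2 * N + 3) / pi ^ (2 * N + 4) *
            ((2 ^ (2 * N + 4) - 1) * pi ^ (2 * N + 4) * \<bar>bernoulli (2 * N + 4)\<bar> / (2 * fact (2 * N + 4)) - 1))"
proof -
  have exponents: "2 * (N + 1) + 2 = 2 * N + 4" "2 * (N + 1) + 4 = 2 * N + 6" by simp_all
  have "(\<lambda>k. real N * t ^ (2 * N + 1) * (2 * (2 / tan_pole (Suc k) ^ (2 * N + 2)))
             + t ^ (2 * N + 3) * (2 * (2 / tan_pole (Suc k) ^ (2 * (N + 1) + 2))))
     sums (real N * t ^ (2 * N + 1) * (2 * (tan_coeff N - 2 / (pi / 2) ^ (2 * N + 2)))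
           + t ^ (2 * N + 3) * (2 * (tan_coeff (N + 1) - 2 / (pi / 2) ^ (2 * (N + 1) + 2))))"
    by (intro sums_add sums_mult tan_coeff_tail_sums)
  moreover have "2 * (2 * x) = 4 * (x :: real)" for x by simp
  ultimately show ?thesis
    unfolding tan_coeff_tail_eq[of N] tan_coeff_tail_eq[of "N + 1", unfolded exponents] exponents
    by (simp only: mult.assoc mult.commute mult.left_commute times_divide_eq_right times_divide_eq_left)
qed

lemma pole_remainder_less_M_term:
  assumes "0 < t" "t < pi / 2"
  shows "pole_remainder N t (tan_pole (Suc k))
           < real N * 2 ^ (2 * N + 2) * t ^ (2 * N + 1) / pi ^ (2 * N + 2) *
               (1 / ((2 * real (k + 2) - 1) ^ (2 * N) * real (k + 2) * real (k + 1)))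
             + 2 ^ (2 * N + 2) * t ^ (2 * N + 3) / pi ^ (2 * N + 4) *
               (1 / ((2 * real (k + 2) - 1) ^ (2 * N) * real (k + 2) ^ 2 * real (k + 1) ^ 2))"
proof -
  define K L where "K = real (k + 1)" and "L = real (k + 2)"
  define c where "c = 2 * L - 1"
  define C where "C = c ^ (2 * N)"
  define T where "T = (2 :: real) ^ (2 * N + 2)"
  have pole: "tan_pole (Suc k) = c * pi / 2" by (simp add: tan_pole_def c_def L_def field_simps)
  have "1 < c" by (simp add: c_def L_def)
  have c2: "c\<^sup>2 - 1 = 4 * (L * K)"
    by (simp add: c_def K_def L_def power2_eq_square algebra_simps)
  have powers: "(2 :: real) ^ (2 * N + 4) = 4 * T" "(2 :: real) ^ (2 * N + 6) = 16 * T"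
    by (simp_all add: T_def power_add)
  have "pole_remainder N t (tan_pole (Suc k))
      < real N * (4 * T) * t ^ (2 * N + 1) / (pi ^ (2 * N + 2) * C * (4 * (L * K)))
        + 16 * T * t ^ (2 * N + 3) / (pi ^ (2 * N + 4) * C * (4 * (L * K))\<^sup>2)"
    using pole_remainder_less[OF \<open>1 < c\<close> assms, of N] unfolding pole c2 powers C_def[symmetric] .
  also have "C \<noteq> 0" "K \<noteq> 0" "L \<noteq> 0" using \<open>1 < c\<close> by (simp_all add: C_def K_def L_def)
  hence "real N * (4 * T) * t ^ (2 * N + 1) / (pi ^ (2 * N + 2) * C * (4 * (L * K)))
        + 16 * T * t ^ (2 * N + 3) / (pi ^ (2 * N + 4) * C * (4 * (L * K))\<^sup>2)
      = real N * T * t ^ (2 * N + 1) / pi ^ (2 * N + 2) * (1 / (C * L * K))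
        + T * t ^ (2 * N + 3) / pi ^ (2 * N + 4) * (1 / (C * L ^ 2 * K ^ 2))"
    by (simp add: field_simps power2_eq_square)
  finally show ?thesis unfolding C_def c_def T_def K_def L_def .
qed

lemma summable_M_series:
  "summable (\<lambda>k. 1 / ((2 * real (k + 2) - 1) ^ (2 * N) * real (k + 2) * real (k + 1)))"
  "summable (\<lambda>k. 1 / ((2 * real (k + 2) - 1) ^ (2 * N) * real (k + 2) ^ 2 * real (k + 1) ^ 2))"
proof -
  have "(real k + 1)\<^sup>2 \<le> (2 * real (k + 2) - 1) ^ (2 * N) * real (k + 2) * real (k + 1)"
       "(real k + 1)\<^sup>2 \<le> (2 * real (k + 2) - 1) ^ (2 * N) * real (k + 2) ^ 2 * real (k + 1) ^ 2" for k
  proof -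
    have c: "1 \<le> (2 * real (k + 2) - 1) ^ (2 * N)" by (intro one_le_power) simp
    have "(real k + 1)\<^sup>2 \<le> real (k + 2) * real (k + 1)"
      by (simp add: power2_eq_square algebra_simps)
    also have "\<dots> \<le> (2 * real (k + 2) - 1) ^ (2 * N) * real (k + 2) * real (k + 1)"
      using mult_right_mono[OF c, of "real (k + 2) * real (k + 1)"] by (simp add: mult.assoc)
    finally show "(real k + 1)\<^sup>2 \<le> (2 * real (k + 2) - 1) ^ (2 * N) * real (k + 2) * real (k + 1)" .
    have "(real k + 1)\<^sup>2 \<le> (real (k + 2) * real (k + 1))\<^sup>2"
      by (intro power_mono) (auto simp: algebra_simps)
    also have "\<dots> \<le> (2 * real (k + 2) - 1) ^ (2 * N) * (real (k + 2) * real (k + 1))\<^sup>2"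
      using mult_right_mono[OF c, of "(real (k + 2) * real (k + 1))\<^sup>2"] by simp
    finally show "(real k + 1)\<^sup>2 \<le> (2 * real (k + 2) - 1) ^ (2 * N) * real (k + 2) ^ 2 * real (k + 1) ^ 2"
      by (simp add: power_mult_distrib mult.assoc)
  qed
  thus "summable (\<lambda>k. 1 / ((2 * real (k + 2) - 1) ^ (2 * N) * real (k + 2) * real (k + 1)))"
       "summable (\<lambda>k. 1 / ((2 * real (k + 2) - 1) ^ (2 * N) * real (k + 2) ^ 2 * real (k + 1) ^ 2))"
    by (intro summable_one_div_if_square_le; simp)+
qed

lemma M_series_sums:
  "(\<lambda>k. real N * 2 ^ (2 * N + 2) * t ^ (2 * N + 1) / pi ^ (2 * N + 2) *
          (1 / ((2 * real (k + 2) - 1) ^ (2 * N) * real (k + 2) * real (k + 1)))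
        + 2 ^ (2 * N + 2) * t ^ (2 * N + 3) / pi ^ (2 * N + 4) *
          (1 / ((2 * real (k + 2) - 1) ^ (2 * N) * real (k + 2) ^ 2 * real (k + 1) ^ 2)))
     sums (real N * 2 ^ (2 * N + 2) * t ^ (2 * N + 1) / pi ^ (2 * N + 2) *
            (\<Sum>k. 1 / ((2 * real (k + 2) - 1) ^ (2 * N) * real (k + 2) * real (k + 1)))
          + 2 ^ (2 * N + 2) * t ^ (2 * N + 3) / pi ^ (2 * N + 4) *
            (\<Sum>k. 1 / ((2 * real (k + 2) - 1) ^ (2 * N) * real (k + 2) ^ 2 * real (k + 1) ^ 2)))"
  by (intro sums_add sums_mult summable_sums summable_M_series)

lemma F_series_sums:
  assumes "N \<ge> 1" "0 < t" "t < pi / 2"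
  shows "(\<lambda>k. pole_remainder N t (tan_pole (Suc k)))
           sums (t * (1 / cos t) ^ 2 - tan t
                 - (\<Sum>j=1..N-1. 2 * real j * 2 ^ (2*j+2) * (2 ^ (2*j+2) - 1) * \<bar>bernoulli (2*j+2)\<bar>
                                  / fact (2*j+2) * t ^ (2*j+1))
                 - real N * 2 ^ (2*N+4) * t ^ (2*N+1) / (pi ^ (2*N) * (pi^2 - 4 * t^2))
                 - 2 ^ (2*N+6) * t ^ (2*N+3) / (pi ^ (2*N) * (pi^2 - 4 * t^2) ^ 2))"
    (is "_ sums ?F")
proof -
  have t: "\<bar>t\<bar> < pi / 2" using assms(2,3) by simp
  have first_pole: "pole_remainder N t (tan_pole 0)
      = real N * 2 ^ (2 * N + 4) * t ^ (2 * N + 1) / (pi ^ (2 * N) * (pi\<^sup>2 - 4 * t\<^sup>2))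
        + 2 ^ (2 * N + 6) * t ^ (2 * N + 3) / (pi ^ (2 * N) * (pi\<^sup>2 - 4 * t\<^sup>2)\<^sup>2)"
    using pole_remainder_half_pi_multiple[of 1 t N] t by (simp add: tan_pole_def)
  have "{..<N} = insert 0 {1..N-1}" using assms(1) by auto
  hence taylor_part: "(\<Sum>j<N. 2 * real j * tan_coeff j * t ^ (2 * j + 1))
      = (\<Sum>j=1..N-1. 2 * real j * 2 ^ (2*j+2) * (2 ^ (2*j+2) - 1) * \<bar>bernoulli (2*j+2)\<bar>
                       / fact (2*j+2) * t ^ (2*j+1))"
    by (simp add: tan_coeff_bernoulli mult.assoc)
  have "?F + pole_remainder N t (tan_pole 0)
      = t * (1 / cos t)\<^sup>2 - tan t - (\<Sum>j<N. 2 * real j * tan_coeff j * t ^ (2 * j + 1))"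
    unfolding first_pole taylor_part by simp
  thus ?thesis
    unfolding sums_Suc_iff[of "\<lambda>k. pole_remainder N t (tan_pole k)"] by (simp only: pole_remainder_sums[OF t])
qed

theorem theorem11:
  fixes N :: nat and t :: real
  assumes "N \<ge> 1" and "0 < t" and "t < pi / 2"
  defines "L \<equiv> real N * 2 ^ (2*N+4) * t ^ (2*N+1) / pi ^ (2*N+2) *
              ((2 ^ (2*N+2) - 1) * pi ^ (2*N+2) * \<bar>bernoulli (2*N+2)\<bar> / (2 * fact (2*N+2)) - 1)
            + 2 ^ (2*N+6) * t ^ (2*N+3) / pi ^ (2*N+4) *
              ((2 ^ (2*N+4) - 1) * pi ^ (2*N+4) * \<bar>bernoulli (2*N+4)\<bar> / (2 * fact (2*N+4)) - 1)"
    and "M \<equiv> real N * 2 ^ (2*N+2) * t ^ (2*N+1) / pi ^ (2*N+2) *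
              (\<Sum>k. 1 / ((2 * real (k+2) - 1) ^ (2*N) * real (k+2) * real (k+1)))
            + 2 ^ (2*N+2) * t ^ (2*N+3) / pi ^ (2*N+4) *
              (\<Sum>k. 1 / ((2 * real (k+2) - 1) ^ (2*N) * real (k+2) ^ 2 * real (k+1) ^ 2))"
    and "F \<equiv> t * (1 / cos t) ^ 2 - tan t
            - (\<Sum>j=1..N-1. 2 * real j * 2 ^ (2*j+2) * (2 ^ (2*j+2) - 1) * \<bar>bernoulli (2*j+2)\<bar>
                              / fact (2*j+2) * t ^ (2*j+1))
            - real N * 2 ^ (2*N+4) * t ^ (2*N+1) / (pi ^ (2*N) * (pi^2 - 4 * t^2))
            - 2 ^ (2*N+6) * t ^ (2*N+3) / (pi ^ (2*N) * (pi^2 - 4 * t^2) ^ 2)"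
  shows "L < F \<and> F < M"
proof -
  have F_sums: "(\<lambda>k. pole_remainder N t (tan_pole (Suc k))) sums F"
    unfolding F_def using assms(1-3) by (rule F_series_sums)
  have "L < F"
    unfolding L_def
  proof (rule sums_less[OF L_series_sums F_sums], rule pole_remainder_gt[OF assms(2)])
    show "t < tan_pole (Suc k)" for k
      using tan_pole_gt_abs[of t "Suc k"] assms(2,3) by simp
  qed
  moreover have "F < M"
    unfolding M_def by (rule sums_less[OF F_sums M_series_sums pole_remainder_less_M_term[OF assms(2,3)]])
  ultimately show ?thesis ..
qed

end
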